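(* Let $g,l:\mathbb{R}^d\to\mathbb{R}$ be convex and continuously differentiable, $f=g+l$, with a minimizer $x^*$. Let $x_0\in\mathbb{R}^d$ and let $h(\cdot;x_0):\mathbb{R}^d\to\mathbb{R}$ be continuously differentiable and strictly convex with $h(x;x_0)\ge0$ and $h(x;x_0)=0$ iff $x=x_0$. Let $T\in(0,\infty]$, let $a:[0,T)\to\mathbb{R}$ be continuous with $a_0=0$ and $a_\tau>0$ for $0<\tau<T$, and $A_t:=\int_0^ta_\tau\,d\tau$. Suppose $x,z:[0,T)\to\mathbb{R}^d$ are continuous on $[0,T)$, continuously differentiable on $(0,T)$, $x(0)=x_0$, and for all $t\in[0,T)$ $$A_t\dot x_t=a_t(z_t-x_t)\ (t>0),\qquad z_t=\operatorname{argmin}_{x\in\mathbb{R}^d}\Bigl\{\int_0^ta_\tau\hat f(x;x_\tau)\,d\tau+h(x;x_0)\Bigr\}.$$ Then for all $t\in(0,T)$, $$f(x_t)-f(x^* )\le\frac{h(x^*;x_0)}{A_t}.$$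
   Context: $\hat f(x;y):=g(y)+\langle\nabla g(y),x-y\rangle+l(x)$. *)

theory Defs
  imports "HOL-Analysis.Analysis"
begin

definition strict_convex_on :: "'a::real_vector set \<Rightarrow> ('a \<Rightarrow> real) \<Rightarrow> bool" where
  "strict_convex_on S f \<longleftrightarrow>
     convex S \<and> (\<forall>x\<in>S. \<forall>y\<in>S. \<forall>u::real. x \<noteq> y \<and> 0 < u \<and> u < 1 \<longrightarrow>
        f ((1 - u) *\<^sub>R x + u *\<^sub>R y) < (1 - u) * f x + u * f y)"

definition fhat :: "('a::real_inner \<Rightarrow> real) \<Rightarrow> ('a \<Rightarrow> 'a) \<Rightarrow> ('a \<Rightarrow> real) \<Rightarrow> 'a \<Rightarrow> 'a \<Rightarrow> real" where
  "fhat g Dg l x y = g y + inner (Dg y) (x - y) + l x"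

end

theory Submission
  imports Defs
begin

text \<open>Let \<open>\<Psi>\<^sub>t(y) = \<integral>\<^sub>0\<^sup>t a\<^sub>\<tau> fhat(y; x\<^sub>\<tau>) d\<tau> + h(y)\<close>, so that \<open>z\<^sub>t\<close> minimizes \<open>\<Psi>\<^sub>t\<close>.
  The energy \<open>E\<^sub>t = \<Psi>\<^sub>t(z\<^sub>t) - A\<^sub>t f(x\<^sub>t)\<close> is nondecreasing: by stationarity of \<open>z\<^sub>t\<close> the
  motion of \<open>z\<close> does not contribute to \<open>E'\<close>, and the ODE turns the remaining terms into
  \<open>a\<^sub>t (l(z\<^sub>t) - l(x\<^sub>t) - \<langle>\<nabla>l(x\<^sub>t), z\<^sub>t - x\<^sub>t\<rangle>) \<ge> 0\<close>. Hence \<open>A\<^sub>t f(x\<^sub>t) \<le> \<Psi>\<^sub>t(z\<^sub>t) - E\<^sub>0 \<le> \<Psi>\<^sub>t(x\<^sup>*)\<close>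
  as \<open>E\<^sub>0 = h(z\<^sub>0) \<ge> 0\<close>, and \<open>\<Psi>\<^sub>t(x\<^sup>*) \<le> A\<^sub>t f(x\<^sup>*) + h(x\<^sup>*)\<close> because convexity of \<open>g\<close> makes \<open>fhat(\<cdot>; y) \<le> f\<close>.\<close>

lemma convex_on_gderiv_le:
  fixes f :: "'a::real_inner \<Rightarrow> real"
  assumes convex: "convex_on UNIV f" and grad: "GDERIV f x :> D"
  shows "f x + D \<bullet> (y - x) \<le> f y"
proof -
  let ?p = "\<lambda>u::real. x + u *\<^sub>R (y - x)"
  define \<phi> where "\<phi> = (\<lambda>u. f (?p u))"
  have "convex_on UNIV \<phi>"
  proof (rule convex_onI)
    fix t u v :: real assume "0 < t" "t < 1"
    have "?p ((1 - t) *\<^sub>R u + t *\<^sub>R v) = (1 - t) *\<^sub>R ?p u + t *\<^sub>R ?p v"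
      by (simp add: algebra_simps)
    then show "\<phi> ((1 - t) *\<^sub>R u + t *\<^sub>R v) \<le> (1 - t) * \<phi> u + t * \<phi> v"
      using convex_onD[OF convex, of t "?p u" "?p v"] \<open>0 < t\<close> \<open>t < 1\<close> by (simp add: \<phi>_def)
  qed simp
  moreover have "(?p has_derivative (\<lambda>u. u *\<^sub>R (y - x))) (at 0)"
    by (auto intro!: derivative_eq_intros)
  then have "(\<phi> has_derivative (\<lambda>u. (u *\<^sub>R (y - x)) \<bullet> D)) (at 0)"
    using has_derivative_compose grad by (fastforce simp: \<phi>_def gderiv_def)
  then have "(\<phi> has_field_derivative (y - x) \<bullet> D) (at 0)"
    by (simp add: has_field_derivative_def mult.commute[of _ "(y - x) \<bullet> D"])
  ultimately have "\<phi> 1 - \<phi> 0 \<ge> ((y - x) \<bullet> D) * (1 - 0)"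
    by (intro convex_on_imp_above_tangent) auto
  then show ?thesis by (simp add: \<phi>_def inner_commute)
qed

lemma gderiv_comp_has_real_derivative:
  fixes f :: "'a::real_inner \<Rightarrow> real"
  assumes "GDERIV f (p s) :> D" and "(p has_vector_derivative p') (at s)"
  shows "((\<lambda>t. f (p t)) has_real_derivative D \<bullet> p') (at s)"
proof -
  have "((\<lambda>t. f (p t)) has_derivative (\<lambda>u. (u *\<^sub>R p') \<bullet> D)) (at s)"
    using has_derivative_compose[OF assms(2)[unfolded has_vector_derivative_def]
        assms(1)[unfolded gderiv_def]] by simp
  then show ?thesis
    by (simp add: has_field_derivative_def mult.commute[of _ "D \<bullet> p'"] inner_commute)
qed

lemma gderiv_eq_0_at_minimum:
  fixes f :: "'a::real_inner \<Rightarrow> real"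
  assumes "GDERIV f y :> D" and "\<And>w. f y \<le> f w"
  shows "D = 0"
proof -
  have "(\<lambda>v. v \<bullet> D) = (\<lambda>v. 0)"
    using differential_zero_maxmin[of y UNIV f] assms by (auto simp: gderiv_def)
  then have "D \<bullet> D = 0" by metis
  then show ?thesis by simp
qed

lemma integral_has_vector_derivative_interior:
  fixes f :: "real \<Rightarrow> 'b::banach"
  assumes "continuous_on {a..b} f" and "s \<in> {a<..<b}"
  shows "((\<lambda>u. integral {a..u} f) has_vector_derivative f s) (at s)"
  using integral_has_vector_derivative[OF assms(1), of s] at_within_interior[of s "{a..b}"] assms(2)
  by auto

lemma integral_pos_of_pos_on_interior:
  fixes f :: "real \<Rightarrow> real"
  assumes "continuous_on {a..b} f" and "a < b" and "\<And>s. s \<in> {a<..<b} \<Longrightarrow> 0 < f s"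
  shows "0 < integral {a..b} f"
proof -
  have "integral {a..a} f < integral {a..b} f"
  proof (rule DERIV_pos_imp_increasing_open[OF \<open>a < b\<close>])
    fix s assume "a < s" "s < b"
    then show "\<exists>y. ((\<lambda>u. integral {a..u} f) has_real_derivative y) (at s) \<and> 0 < y"
      using integral_has_vector_derivative_interior[OF assms(1)] assms(3)
      by (auto simp: has_real_derivative_iff_has_vector_derivative)
  qed (rule indefinite_integral_continuous_1[OF integrable_continuous_interval[OF assms(1)]])
  then show ?thesis by simp
qed

locale linearized_flow =
  fixes g l h :: "'a::euclidean_space \<Rightarrow> real"
    and Dg Dl Dh :: "'a \<Rightarrow> 'a"
    and a :: "real \<Rightarrow> real"
    and x z xd zd :: "real \<Rightarrow> 'a"
    and t1 :: real
  assumes g_convex: "convex_on UNIV g"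
    and l_convex: "convex_on UNIV l"
    and g_grad: "\<And>y. GDERIV g y :> Dg y" and Dg_cont: "continuous_on UNIV Dg"
    and l_grad: "\<And>y. GDERIV l y :> Dl y"
    and h_grad: "\<And>y. GDERIV h y :> Dh y"
    and h_nonneg: "\<And>y. 0 \<le> h y"
    and a_cont: "continuous_on {0..t1} a"
    and a_nonneg: "\<And>t. t \<in> {0..t1} \<Longrightarrow> 0 \<le> a t"
    and x_cont: "continuous_on {0..t1} x"
    and z_cont: "continuous_on {0..t1} z"
    and x_deriv: "\<And>t. t \<in> {0<..<t1} \<Longrightarrow> (x has_vector_derivative xd t) (at t)"
    and z_deriv: "\<And>t. t \<in> {0<..<t1} \<Longrightarrow> (z has_vector_derivative zd t) (at t)"
    and ode: "\<And>t. t \<in> {0<..<t1} \<Longrightarrow> integral {0..t} a *\<^sub>R xd t = a t *\<^sub>R (z t - x t)"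
    and z_argmin: "\<And>t y. t \<in> {0..t1} \<Longrightarrow>
          integral {0..t} (\<lambda>\<tau>. a \<tau> * fhat g Dg l (z t) (x \<tau>)) + h (z t)
          \<le> integral {0..t} (\<lambda>\<tau>. a \<tau> * fhat g Dg l y (x \<tau>)) + h y"
begin

definition A :: "real \<Rightarrow> real" where
  "A t = integral {0..t} a"

definition model :: "real \<Rightarrow> 'a \<Rightarrow> real" where
  "model t y = integral {0..t} (\<lambda>\<tau>. a \<tau> * fhat g Dg l y (x \<tau>)) + h y"

definition energy :: "real \<Rightarrow> real" where
  "energy t = model t (z t) - A t * (g (x t) + l (x t))"

text \<open>Since \<open>fhat(y; x\<^sub>\<tau>)\<close> is affine in \<open>y\<close> up to \<open>l(y)\<close>, the integral splits into an offset and a slope.\<close>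

definition model_offset :: "real \<Rightarrow> real" where
  "model_offset t = integral {0..t} (\<lambda>\<tau>. a \<tau> * (g (x \<tau>) - Dg (x \<tau>) \<bullet> x \<tau>))"

definition model_slope :: "real \<Rightarrow> 'a" where
  "model_slope t = integral {0..t} (\<lambda>\<tau>. a \<tau> *\<^sub>R Dg (x \<tau>))"

lemma g_cont: "continuous_on UNIV g" and l_cont: "continuous_on UNIV l"
  and h_cont: "continuous_on UNIV h"
  using g_grad l_grad h_grad
  by (meson continuous_at_imp_continuous_on gderiv_def has_derivative_continuous)+

lemma offset_integrand_cont: "continuous_on {0..t1} (\<lambda>\<tau>. a \<tau> * (g (x \<tau>) - Dg (x \<tau>) \<bullet> x \<tau>))"
  and slope_integrand_cont: "continuous_on {0..t1} (\<lambda>\<tau>. a \<tau> *\<^sub>R Dg (x \<tau>))"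
  using a_cont x_cont continuous_on_compose2[OF g_cont x_cont]
    continuous_on_compose2[OF Dg_cont x_cont]
  by (auto intro!: continuous_intros)

lemma integrable_on_initial_segment:
  fixes f :: "real \<Rightarrow> 'b::banach"
  assumes "continuous_on {0..t1} f" and "t \<in> {0..t1}"
  shows "f integrable_on {0..t}"
  using assms by (intro integrable_continuous_interval continuous_on_subset[OF assms(1)]) auto

lemma model_affine:
  assumes t: "t \<in> {0..t1}"
  shows "model t y = model_offset t + model_slope t \<bullet> y + A t * l y + h y"
proof -
  have offset: "(\<lambda>\<tau>. a \<tau> * (g (x \<tau>) - Dg (x \<tau>) \<bullet> x \<tau>)) integrable_on {0..t}"
    and slope: "(\<lambda>\<tau>. a \<tau> *\<^sub>R Dg (x \<tau>)) integrable_on {0..t}"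
    and weight: "a integrable_on {0..t}"
    using integrable_on_initial_segment offset_integrand_cont slope_integrand_cont a_cont t
    by blast+
  have slope_y: "integral {0..t} (\<lambda>\<tau>. (a \<tau> *\<^sub>R Dg (x \<tau>)) \<bullet> y) = model_slope t \<bullet> y"
    and slope_y_int: "(\<lambda>\<tau>. (a \<tau> *\<^sub>R Dg (x \<tau>)) \<bullet> y) integrable_on {0..t}"
    using integral_linear[OF slope bounded_linear_inner_left[of y]]
      integrable_linear[OF slope bounded_linear_inner_left[of y]]
    by (simp_all add: o_def model_slope_def)
  have "(\<lambda>\<tau>. a \<tau> * fhat g Dg l y (x \<tau>))
      = (\<lambda>\<tau>. (a \<tau> * (g (x \<tau>) - Dg (x \<tau>) \<bullet> x \<tau>) + (a \<tau> *\<^sub>R Dg (x \<tau>)) \<bullet> y) + a \<tau> * l y)"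
    by (auto simp: fhat_def algebra_simps inner_diff_right)
  then show ?thesis
    using offset slope_y slope_y_int integrable_on_mult_left[OF weight]
    by (simp add: model_def model_offset_def A_def integral_add integrable_add)
qed

lemma model_stationary:
  assumes t: "t \<in> {0..t1}"
  shows "model_slope t + A t *\<^sub>R Dl (z t) + Dh (z t) = 0"
proof (rule gderiv_eq_0_at_minimum)
  show "GDERIV (model t) (z t) :> model_slope t + A t *\<^sub>R Dl (z t) + Dh (z t)"
    using l_grad h_grad unfolding gderiv_def model_affine[OF t, abs_def]
    by (auto intro!: derivative_eq_intros simp: inner_add_right inner_commute)
  show "model t (z t) \<le> model t w" for w
    using z_argmin[OF t] by (simp add: model_def)
qed

lemma energy_has_real_derivative:
  assumes s: "s \<in> {0<..<t1}"
  shows "(energy has_real_derivative a s * (l (z s) - l (x s) - Dl (x s) \<bullet> (z s - x s))) (at s)"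
proof -
  have sI: "s \<in> {0..t1}" using s by auto
  have dA: "(A has_real_derivative a s) (at s)"
    using integral_has_vector_derivative_interior[OF a_cont s]
    by (simp add: A_def[abs_def] has_real_derivative_iff_has_vector_derivative)
  have dC: "(model_offset has_real_derivative a s * (g (x s) - Dg (x s) \<bullet> x s)) (at s)"
    using integral_has_vector_derivative_interior[OF offset_integrand_cont s]
    by (simp add: model_offset_def[abs_def] has_real_derivative_iff_has_vector_derivative)
  have dG: "(model_slope has_vector_derivative a s *\<^sub>R Dg (x s)) (at s)"
    using integral_has_vector_derivative_interior[OF slope_integrand_cont s]
    by (simp add: model_slope_def[abs_def])
  have dGz: "((\<lambda>u. model_slope u \<bullet> z u) has_real_derivative
      model_slope s \<bullet> zd s + (a s *\<^sub>R Dg (x s)) \<bullet> z s) (at s)"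
    using bounded_bilinear.has_vector_derivative[OF bounded_bilinear_inner dG z_deriv[OF s]]
    by (simp add: has_real_derivative_iff_has_vector_derivative)
  note chain = gderiv_comp_has_real_derivative[OF _ z_deriv[OF s]]
    gderiv_comp_has_real_derivative[OF _ x_deriv[OF s]]
  let ?E = "\<lambda>u. model_offset u + model_slope u \<bullet> z u + A u * l (z u) + h (z u)
              - A u * (g (x u) + l (x u))"
  have "(?E has_real_derivative
      a s * (g (x s) - Dg (x s) \<bullet> x s) + (model_slope s \<bullet> zd s + (a s *\<^sub>R Dg (x s)) \<bullet> z s)
      + (a s * l (z s) + (Dl (z s) \<bullet> zd s) * A s) + Dh (z s) \<bullet> zd s
      - (a s * (g (x s) + l (x s)) + (Dg (x s) \<bullet> xd s + Dl (x s) \<bullet> xd s) * A s)) (at s)"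
    (is "(_ has_real_derivative ?D) _")
    by (intro DERIV_diff DERIV_add DERIV_mult dC dGz dA chain g_grad l_grad h_grad)
  moreover have "?D = a s * (l (z s) - l (x s) - Dl (x s) \<bullet> (z s - x s))"
  proof -
    have "model_slope s \<bullet> zd s + A s * (Dl (z s) \<bullet> zd s) + Dh (z s) \<bullet> zd s = 0"
      using arg_cong[OF model_stationary[OF sI], of "\<lambda>w. w \<bullet> zd s"]
      by (simp add: inner_add_left)
    moreover have "A s * (Dg (x s) \<bullet> xd s + Dl (x s) \<bullet> xd s)
        = a s * (Dg (x s) \<bullet> z s - Dg (x s) \<bullet> x s + (Dl (x s) \<bullet> z s - Dl (x s) \<bullet> x s))"
      using arg_cong[OF ode[OF s], of "\<lambda>w. (Dg (x s) + Dl (x s)) \<bullet> w"]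
      by (simp add: A_def inner_add_left inner_diff_right)
    ultimately show ?thesis by (simp add: inner_diff_right algebra_simps)
  qed
  ultimately have "(?E has_real_derivative a s * (l (z s) - l (x s) - Dl (x s) \<bullet> (z s - x s))) (at s)"
    by simp
  then show ?thesis
    by (rule has_field_derivative_transform_within_open[of _ _ _ "{0<..<t1}"])
      (use s in \<open>auto simp: energy_def model_affine\<close>)
qed

lemma energy_nonneg:
  assumes t: "t \<in> {0..t1}"
  shows "0 \<le> energy t"
proof -
  have sub: "{0..t} \<subseteq> {0..t1}" using t by auto
  have cont_integral: "continuous_on {0..t} (\<lambda>u. integral {0..u} f)"
    if "continuous_on {0..t1} f" for f :: "real \<Rightarrow> 'b::banach"
    using indefinite_integral_continuous_1 integrable_on_initial_segment[OF that t] .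
  have cz: "continuous_on {0..t} z" and cx: "continuous_on {0..t} x"
    using continuous_on_subset[OF z_cont sub] continuous_on_subset[OF x_cont sub] .
  have "continuous_on {0..t} (\<lambda>u. model_offset u + model_slope u \<bullet> z u + A u * l (z u)
      + h (z u) - A u * (g (x u) + l (x u)))"
    using cont_integral[OF a_cont] cont_integral[OF offset_integrand_cont]
      cont_integral[OF slope_integrand_cont] cz
      continuous_on_compose2[OF l_cont cz] continuous_on_compose2[OF h_cont cz]
      continuous_on_compose2[OF g_cont cx] continuous_on_compose2[OF l_cont cx]
    unfolding A_def[abs_def] model_offset_def[abs_def] model_slope_def[abs_def]
    by (intro continuous_intros) auto
  then have cont: "continuous_on {0..t} energy"
    by (rule continuous_on_eq) (use sub in \<open>auto simp: energy_def model_affine\<close>)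
  have deriv: "\<exists>D. (energy has_real_derivative D) (at s) \<and> 0 \<le> D" if "0 < s" "s < t" for s
  proof -
    have "s \<in> {0<..<t1}" using that t by auto
    moreover have "l (x s) + Dl (x s) \<bullet> (z s - x s) \<le> l (z s)"
      by (rule convex_on_gderiv_le[OF l_convex l_grad])
    ultimately show ?thesis
      using energy_has_real_derivative a_nonneg[of s] by force
  qed
  have "energy 0 \<le> energy t"
    using DERIV_nonneg_imp_increasing_open[OF _ deriv cont] t by simp
  moreover have "energy 0 = h (z 0)"
    by (simp add: energy_def model_def A_def)
  ultimately show ?thesis using h_nonneg order_trans by metis
qed

lemma model_le:
  assumes t: "t \<in> {0..t1}"
  shows "model t y \<le> A t * (g y + l y) + h y"
proof -
  have weight: "a integrable_on {0..t}"
    by (rule integrable_on_initial_segment[OF a_cont t])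
  have "continuous_on {0..t1} (\<lambda>\<tau>. g (x \<tau>))" "continuous_on {0..t1} (\<lambda>\<tau>. Dg (x \<tau>))"
    using continuous_on_compose2[OF g_cont x_cont subset_UNIV]
      continuous_on_compose2[OF Dg_cont x_cont subset_UNIV] by auto
  then have "continuous_on {0..t1} (\<lambda>\<tau>. a \<tau> * fhat g Dg l y (x \<tau>))"
    unfolding fhat_def using a_cont x_cont by (intro continuous_intros)
  then have "integral {0..t} (\<lambda>\<tau>. a \<tau> * fhat g Dg l y (x \<tau>))
      \<le> integral {0..t} (\<lambda>\<tau>. a \<tau> * (g y + l y))"
  proof (rule integral_le[OF integrable_on_initial_segment[OF _ t]
        integrable_on_mult_left[OF weight]])
    fix \<tau> assume "\<tau> \<in> {0..t}"
    then have "0 \<le> a \<tau>" using a_nonneg t by auto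
    moreover have "fhat g Dg l y (x \<tau>) \<le> g y + l y"
      using convex_on_gderiv_le[OF g_convex g_grad, of "x \<tau>" y] by (simp add: fhat_def)
    ultimately show "a \<tau> * fhat g Dg l y (x \<tau>) \<le> a \<tau> * (g y + l y)"
      by (rule mult_left_mono[rotated])
  qed
  then show ?thesis by (simp add: model_def A_def)
qed

lemma weighted_gap_le:
  assumes t: "t \<in> {0..t1}"
  shows "A t * ((g (x t) + l (x t)) - (g y + l y)) \<le> h y"
proof -
  have "A t * (g (x t) + l (x t)) \<le> model t (z t)"
    using energy_nonneg[OF t] by (simp add: energy_def)
  also have "\<dots> \<le> model t y"
    using z_argmin[OF t] by (simp add: model_def)
  also have "\<dots> \<le> A t * (g y + l y) + h y"
    by (rule model_le[OF t])
  finally show ?thesis by (simp add: algebra_simps)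
qed

end

theorem mainTheorem5:
  fixes g l h :: "'a::euclidean_space \<Rightarrow> real"
    and Dg Dl Dh :: "'a \<Rightarrow> 'a"
    and xstar x0 :: 'a
    and T :: ereal
    and a :: "real \<Rightarrow> real"
    and x z xd zd :: "real \<Rightarrow> 'a"
  assumes g_convex: "convex_on UNIV g"
    and l_convex: "convex_on UNIV l"
    and g_grad: "\<And>y. GDERIV g y :> Dg y" and Dg_cont: "continuous_on UNIV Dg"
    and l_grad: "\<And>y. GDERIV l y :> Dl y" and Dl_cont: "continuous_on UNIV Dl"
    and xstar_min: "\<And>y. g xstar + l xstar \<le> g y + l y"
    and h_grad: "\<And>y. GDERIV h y :> Dh y" and Dh_cont: "continuous_on UNIV Dh"
    and h_strict: "strict_convex_on UNIV h"
    and h_nonneg: "\<And>y. h y \<ge> 0"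
    and h_zero: "\<And>y. h y = 0 \<longleftrightarrow> y = x0"
    and T_pos: "T > 0"
    and a_cont: "continuous_on {t. 0 \<le> t \<and> ereal t < T} a"
    and a_zero: "a 0 = 0"
    and a_pos: "\<And>t. 0 < t \<Longrightarrow> ereal t < T \<Longrightarrow> a t > 0"
    and x_cont: "continuous_on {t. 0 \<le> t \<and> ereal t < T} x"
    and z_cont: "continuous_on {t. 0 \<le> t \<and> ereal t < T} z"
    and x_deriv: "\<And>t. 0 < t \<Longrightarrow> ereal t < T \<Longrightarrow> (x has_vector_derivative xd t) (at t)"
    and z_deriv: "\<And>t. 0 < t \<Longrightarrow> ereal t < T \<Longrightarrow> (z has_vector_derivative zd t) (at t)"
    and xd_cont: "continuous_on {t. 0 < t \<and> ereal t < T} xd"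
    and zd_cont: "continuous_on {t. 0 < t \<and> ereal t < T} zd"
    and x_init: "x 0 = x0"
    and ode: "\<And>t. 0 < t \<Longrightarrow> ereal t < T \<Longrightarrow>
                integral {0..t} a *\<^sub>R xd t = a t *\<^sub>R (z t - x t)"
    and z_argmin: "\<And>t y. 0 \<le> t \<Longrightarrow> ereal t < T \<Longrightarrow>
                integral {0..t} (\<lambda>\<tau>. a \<tau> * fhat g Dg l (z t) (x \<tau>)) + h (z t)
                \<le> integral {0..t} (\<lambda>\<tau>. a \<tau> * fhat g Dg l y (x \<tau>)) + h y"
  shows "\<And>t. 0 < t \<Longrightarrow> ereal t < T \<Longrightarrow>
           (g (x t) + l (x t)) - (g xstar + l xstar) \<le> h xstar / integral {0..t} a"
proof -
  fix t assume t: "0 < t" "ereal t < T"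
  have before_T: "ereal s < T" if "s \<le> t" for s
    using t(2) that by (metis ereal_less_eq(3) order_le_less_trans)
  have sub: "{0..t} \<subseteq> {s. 0 \<le> s \<and> ereal s < T}" using before_T by auto
  have a_cont_t: "continuous_on {0..t} a" using continuous_on_subset[OF a_cont sub] .
  have a_nonneg: "0 \<le> a s" if "s \<in> {0..t}" for s
    using that a_zero a_pos[of s] before_T[of s] by (cases "s = 0") auto
  interpret linearized_flow g l h Dg Dl Dh a x z xd zd t
    by unfold_locales
      (auto intro!: g_convex l_convex g_grad Dg_cont l_grad h_grad h_nonneg a_nonneg
        a_cont_t continuous_on_subset[OF x_cont sub]
        continuous_on_subset[OF z_cont sub] x_deriv z_deriv ode z_argmin before_T)
  have "0 < integral {0..t} a"
    using integral_pos_of_pos_on_interior[OF a_cont_t t(1)] a_pos before_T by auto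
  moreover have "integral {0..t} a * ((g (x t) + l (x t)) - (g xstar + l xstar)) \<le> h xstar"
    using weighted_gap_le[of t xstar] t(1) by (simp add: A_def)
  ultimately show "(g (x t) + l (x t)) - (g xstar + l xstar) \<le> h xstar / integral {0..t} a"
    by (simp add: pos_le_divide_eq mult.commute)
qed

end
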